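(* In the setting of the context, let $(\sigma_t,\sigma'_t)_{t\ge0}$ be the monotone coupling started at $(\sigma_0,\sigma'_0)$. Then for every $t\ge0$, entrywise, \[ \Big(\mathbb E\,\mathrm{dist}(\sigma_t^{(i)},\sigma_t'^{(i)})\Big)_{i=1}^m\le \mathbf A^t\Big(\mathrm{dist}(\sigma_0^{(i)},\sigma_0'^{(i)})\Big)_{i=1}^m, \] where $\mathbf A=(\mathbf A_{ij})$ is the $m\times m$ matrix with $\mathbf A_{ii}=1-\frac1n+\beta K_{ii}(p_i-\frac1n)$ and $\mathbf A_{ij}=\beta p_iK_{ij}$ for $i\ne j$, with $K_{ij}=k_{ij}/n$.
   Context: Fix $m\ge1$, proportions $p_1,\dots,p_m>0$ with $\sum_ip_i=1$, a symmetric matrix $\mathbf K=(k_{ij})$ with all $k_{ij}>0$, and $\beta\ge0$; $n$ is a positive integer with $np_i\in\mathbb N$. The vertex set $V=\{1,\dots,n\}$ is partitioned into blocks $G_1,\dots,G_m$ with $|G_i|=np_i$; for $v\in G_i,w\in G_j$ put $K(v,w)=K_{ij}=k_{ij}/n$. For $\sigma\in\Omega=\{-1,+1\}^V$ and $v\in V$ let $S^v(\sigma)=\sum_{w\ne v}K(v,w)\sigma(w)$ and $r_+(s)=\frac{1+\tanh(\beta s)}2$. The monotone coupling is the grand coupling of Glauber dynamics in which, at each step, a vertex $I$ uniform on $V$ and an independent $U$ uniform on $[0,1]$ are drawn (shared by all chains), and each chain in state $\sigma$ sets the spin at $I$ to $+1$ if $U\le r_+(S^I(\sigma))$ and to $-1$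 otherwise, leaving other spins unchanged. For configurations $\sigma,\sigma'$, $\mathrm{dist}(\sigma^{(i)},\sigma'^{(i)})=\frac12\sum_{v\in G_i}|\sigma(v)-\sigma'(v)|$ is the number of vertices of $G_i$ where they differ. *)

theory Defs
  imports "HOL-Probability.Probability"
begin

text \<open>Spin configurations: vertices are 0..<n (the paper's 1..n shifted by one);
  spins are real numbers in {-1,1}. Values outside the vertex set are fixed to 1.
  Block membership is given by blk :: nat => nat, vertex v lies in G_(blk v),
  blocks indexed 0..<m.\<close>

type_synonym config = "nat \<Rightarrow> real"

definition Omega :: "nat \<Rightarrow> config set" where
  "Omega n = {\<sigma>. (\<forall>v<n. \<sigma> v = 1 \<or> \<sigma> v = -1) \<and> (\<forall>v\<ge>n. \<sigma> v = 1)}"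

definition Kv :: "nat \<Rightarrow> (nat \<Rightarrow> nat) \<Rightarrow> (nat \<Rightarrow> nat \<Rightarrow> real) \<Rightarrow> nat \<Rightarrow> nat \<Rightarrow> real" where
  "Kv n blk k v w = k (blk v) (blk w) / real n"

definition Sfield :: "nat \<Rightarrow> (nat \<Rightarrow> nat) \<Rightarrow> (nat \<Rightarrow> nat \<Rightarrow> real) \<Rightarrow> nat \<Rightarrow> config \<Rightarrow> real" where
  "Sfield n blk k v \<sigma> = (\<Sum>w\<in>{0..<n} - {v}. Kv n blk k v w * \<sigma> w)"

definition r_plus :: "real \<Rightarrow> real \<Rightarrow> real" where
  "r_plus \<beta> s = (1 + tanh (\<beta> * s)) / 2"

definition glauber_update ::
  "nat \<Rightarrow> (nat \<Rightarrow> nat) \<Rightarrow> (nat \<Rightarrow> nat \<Rightarrow> real) \<Rightarrow> real \<Rightarrow> config \<Rightarrow> nat \<Rightarrow> real \<Rightarrow> config" where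
  "glauber_update n blk k \<beta> \<sigma> I U =
     \<sigma>(I := (if U \<le> r_plus \<beta> (Sfield n blk k I \<sigma>) then 1 else -1))"

definition noise :: "nat \<Rightarrow> (nat \<times> real) measure" where
  "noise n = uniform_count_measure {0..<n} \<Otimes>\<^sub>M uniform_measure lborel {0..1::real}"

definition coupling_step ::
  "nat \<Rightarrow> (nat \<Rightarrow> nat) \<Rightarrow> (nat \<Rightarrow> nat \<Rightarrow> real) \<Rightarrow> real \<Rightarrow> config \<times> config \<Rightarrow> (config \<times> config) measure" where
  "coupling_step n blk k \<beta> x =
     distr (noise n) (count_space UNIV)
       (\<lambda>(I, U). (glauber_update n blk k \<beta> (fst x) I U, glauber_update n blk k \<beta> (snd x) I U))"

primrec coupling_law ::
  "nat \<Rightarrow> (nat \<Rightarrow> nat) \<Rightarrow> (nat \<Rightarrow> nat \<Rightarrow> real) \<Rightarrow> real \<Rightarrow> config \<times> config \<Rightarrow> nat \<Rightarrow> (config \<times> config) measure" where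
  "coupling_law n blk k \<beta> x0 0 = return (count_space UNIV) x0"
| "coupling_law n blk k \<beta> x0 (Suc t) = coupling_law n blk k \<beta> x0 t \<bind> coupling_step n blk k \<beta>"

definition block_dist :: "nat \<Rightarrow> (nat \<Rightarrow> nat) \<Rightarrow> nat \<Rightarrow> config \<Rightarrow> config \<Rightarrow> real" where
  "block_dist n blk i \<sigma> \<sigma>' = (1/2) * (\<Sum>v\<in>{v\<in>{0..<n}. blk v = i}. \<bar>\<sigma> v - \<sigma>' v\<bar>)"

definition Amat :: "nat \<Rightarrow> (nat \<Rightarrow> real) \<Rightarrow> (nat \<Rightarrow> nat \<Rightarrow> real) \<Rightarrow> real \<Rightarrow> nat \<Rightarrow> nat \<Rightarrow> real" where
  "Amat n p k \<beta> i j =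
     (if i = j then 1 - 1 / real n + \<beta> * (k i i / real n) * (p i - 1 / real n)
      else \<beta> * p i * (k i j / real n))"

primrec mat_pow :: "nat \<Rightarrow> (nat \<Rightarrow> nat \<Rightarrow> real) \<Rightarrow> nat \<Rightarrow> nat \<Rightarrow> nat \<Rightarrow> real" where
  "mat_pow m A 0 = (\<lambda>i j. if i = j then 1 else 0)"
| "mat_pow m A (Suc t) = (\<lambda>i j. \<Sum>l<m. A i l * mat_pow m A t l j)"

end

theory Submission
  imports Defs
begin

text \<open>Under the monotone coupling both chains resample the same vertex \<open>I\<close> with the same
  uniform \<open>U\<close>, so afterwards they disagree at \<open>I\<close> exactly when \<open>U\<close> lies between the two
  acceptance probabilities \<open>r\<^sub>+(S\<^sup>I(\<sigma>))\<close> and \<open>r\<^sub>+(S\<^sup>I(\<sigma>'))\<close>. As \<open>tanh\<close> is 1-Lipschitz,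
  this happens with probability at most \<open>\<beta>/2 \<bar>S\<^sup>I(\<sigma>) - S\<^sup>I(\<sigma>')\<bar>\<close>, i.e. at most \<open>\<beta>\<close> times
  the \<open>K\<close>-weighted number of disagreements seen from \<open>I\<close>. Averaging over \<open>I \<in> G\<^sub>i\<close> bounds the
  expected distance on block \<open>i\<close> after one step by \<open>(A d)\<^sub>i\<close>: the \<open>-1/n\<close> on the diagonal of \<open>A\<close>
  is the chance that a disagreeing vertex is resampled, the \<open>-\<beta>K\<^sub>i\<^sub>i/n\<close> comes from
  excluding \<open>w = I\<close> from the field. Since \<open>A\<close> is entrywise nonnegative, this one-step bound
  iterates along the chain to \<open>A\<^sup>t\<close>.\<close>

abbreviation block :: "nat \<Rightarrow> (nat \<Rightarrow> nat) \<Rightarrow> nat \<Rightarrow> nat set" where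
  "block n blk i \<equiv> {v\<in>{0..<n}. blk v = i}"

lemma abs_tanh_diff_le: "\<bar>tanh x - tanh y\<bar> \<le> \<bar>x - y\<bar>" for x y :: real
proof -
  have "0 \<le> tanh a - tanh b \<and> tanh a - tanh b \<le> a - b" if "b \<le> a" for a b :: real
  proof -
    have "tanh b \<le> tanh a"
      using that by (metis strict_mono_less_eq tanh_real_strict_mono)
    moreover have "tanh a - a \<le> tanh b - b"
    proof (rule DERIV_nonpos_imp_nonincreasing[OF that, where f = "\<lambda>x. tanh x - x"])
      fix x :: real
      have "cosh x \<noteq> 0" using cosh_real_pos[of x] by simp
      then have "((\<lambda>x. tanh x - x) has_real_derivative - (tanh x)\<^sup>2) (at x)"
        by (auto intro!: derivative_eq_intros)
      then show "\<exists>y. ((\<lambda>x. tanh x - x) has_real_derivative y) (at x) \<and> y \<le> 0"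
        by force
    qed
    ultimately show ?thesis by simp
  qed
  from this[of x y] this[of y x] show ?thesis by linarith
qed

lemma abs_r_plus_diff_le:
  assumes "\<beta> \<ge> 0"
  shows "\<bar>r_plus \<beta> s - r_plus \<beta> s'\<bar> \<le> \<beta> / 2 * \<bar>s - s'\<bar>"
proof -
  have "\<bar>r_plus \<beta> s - r_plus \<beta> s'\<bar> = \<bar>tanh (\<beta> * s) - tanh (\<beta> * s')\<bar> / 2"
    unfolding r_plus_def by (simp add: abs_if field_simps)
  also have "\<dots> \<le> \<bar>\<beta> * s - \<beta> * s'\<bar> / 2"
    using abs_tanh_diff_le by (intro divide_right_mono) auto
  also have "\<dots> = \<beta> / 2 * \<bar>s - s'\<bar>"
    using assms by (simp add: abs_mult flip: right_diff_distrib)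
  finally show ?thesis .
qed

lemma abs_Sfield_diff_le:
  assumes "\<And>w. w \<in> {0..<n} - {v} \<Longrightarrow> Kv n blk k v w \<ge> 0"
  shows "\<bar>Sfield n blk k v \<sigma> - Sfield n blk k v \<sigma>'\<bar>
    \<le> (\<Sum>w\<in>{0..<n} - {v}. Kv n blk k v w * \<bar>\<sigma> w - \<sigma>' w\<bar>)"
proof -
  have "\<bar>Sfield n blk k v \<sigma> - Sfield n blk k v \<sigma>'\<bar>
      = \<bar>\<Sum>w\<in>{0..<n} - {v}. Kv n blk k v w * (\<sigma> w - \<sigma>' w)\<bar>"
    unfolding Sfield_def by (simp add: sum_subtractf right_diff_distrib)
  also have "\<dots> \<le> (\<Sum>w\<in>{0..<n} - {v}. \<bar>Kv n blk k v w * (\<sigma> w - \<sigma>' w)\<bar>)"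
    by (rule sum_abs)
  also have "\<dots> = (\<Sum>w\<in>{0..<n} - {v}. Kv n blk k v w * \<bar>\<sigma> w - \<sigma>' w\<bar>)"
    using assms by (intro sum.cong) (auto simp: abs_mult)
  finally show ?thesis .
qed

lemma abs_r_plus_Sfield_diff_le:
  assumes "\<beta> \<ge> 0" and "\<And>w. w < n \<Longrightarrow> Kv n blk k v w \<ge> 0"
  shows "\<bar>r_plus \<beta> (Sfield n blk k v \<sigma>) - r_plus \<beta> (Sfield n blk k v \<sigma>')\<bar>
    \<le> \<beta> / 2 * (\<Sum>w\<in>{0..<n} - {v}. Kv n blk k v w * \<bar>\<sigma> w - \<sigma>' w\<bar>)"
proof -
  have "\<bar>r_plus \<beta> (Sfield n blk k v \<sigma>) - r_plus \<beta> (Sfield n blk k v \<sigma>')\<bar>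
      \<le> \<beta> / 2 * \<bar>Sfield n blk k v \<sigma> - Sfield n blk k v \<sigma>'\<bar>"
    by (rule abs_r_plus_diff_le[OF assms(1)])
  also have "\<dots> \<le> \<beta> / 2 * (\<Sum>w\<in>{0..<n} - {v}. Kv n blk k v w * \<bar>\<sigma> w - \<sigma>' w\<bar>)"
    using assms by (intro mult_left_mono abs_Sfield_diff_le) auto
  finally show ?thesis .
qed

lemma block_dist_nonneg: "block_dist n blk i \<sigma> \<sigma>' \<ge> 0"
  unfolding block_dist_def by (simp add: sum_nonneg)

lemma abs_diff_le_block_dist:
  assumes "v < n"
  shows "\<bar>\<sigma> v - \<sigma>' v\<bar> / 2 \<le> block_dist n blk (blk v) \<sigma> \<sigma>'"
proof -
  have "\<bar>\<sigma> v - \<sigma>' v\<bar> \<le> (\<Sum>w\<in>block n blk (blk v). \<bar>\<sigma> w - \<sigma>' w\<bar>)"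
    using assms by (intro member_le_sum) auto
  then show ?thesis unfolding block_dist_def by simp
qed

lemma block_dist_fun_upd:
  assumes "v < n"
  shows "block_dist n blk i (\<sigma>(v := u)) (\<sigma>'(v := u')) = block_dist n blk i \<sigma> \<sigma>'
     + (if blk v = i then (\<bar>u - u'\<bar> - \<bar>\<sigma> v - \<sigma>' v\<bar>) / 2 else 0)"
proof (cases "blk v = i")
  case True
  then have v: "v \<in> block n blk i" using assms by simp
  have "(\<Sum>w\<in>block n blk i. \<bar>(\<sigma>(v := u)) w - (\<sigma>'(v := u')) w\<bar>)
      = \<bar>u - u'\<bar> + (\<Sum>w\<in>block n blk i - {v}. \<bar>\<sigma> w - \<sigma>' w\<bar>)"
    using v by (subst sum.remove[OF _ v]) (auto intro!: sum.cong)
  moreover have "(\<Sum>w\<in>block n blk i. \<bar>\<sigma> w - \<sigma>' w\<bar>)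
      = \<bar>\<sigma> v - \<sigma>' v\<bar> + (\<Sum>w\<in>block n blk i - {v}. \<bar>\<sigma> w - \<sigma>' w\<bar>)"
    using v by (subst sum.remove[OF _ v]) auto
  ultimately show ?thesis
    using True unfolding block_dist_def by (simp add: field_simps)
next
  case False
  then show ?thesis unfolding block_dist_def by (auto intro!: sum.cong)
qed

lemma sum_Kv_abs_diff:
  assumes blk: "\<And>w. w < n \<Longrightarrow> blk w < m" and v: "v < n"
  shows "(\<Sum>w\<in>{0..<n} - {v}. Kv n blk k v w * \<bar>\<sigma> w - \<sigma>' w\<bar>)
    = 2 * (\<Sum>j<m. k (blk v) j / n * block_dist n blk j \<sigma> \<sigma>')
      - k (blk v) (blk v) / n * \<bar>\<sigma> v - \<sigma>' v\<bar>"
proof -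
  let ?f = "\<lambda>w. k (blk v) (blk w) / n * \<bar>\<sigma> w - \<sigma>' w\<bar>"
  have "(\<Sum>w\<in>{0..<n}. ?f w) = (\<Sum>j<m. \<Sum>w\<in>block n blk j. ?f w)"
    using blk by (intro sum.group[symmetric]) auto
  also have "\<dots> = (\<Sum>j<m. k (blk v) j / n * (\<Sum>w\<in>block n blk j. \<bar>\<sigma> w - \<sigma>' w\<bar>))"
    by (auto simp: sum_distrib_left intro!: sum.cong)
  also have "\<dots> = 2 * (\<Sum>j<m. k (blk v) j / n * block_dist n blk j \<sigma> \<sigma>')"
    by (simp add: block_dist_def sum_distrib_left)
  finally show ?thesis
    using v unfolding Kv_def by (simp add: sum_diff1)
qed

lemma sum_block_Kv_abs_diff:
  assumes "\<And>w. w < n \<Longrightarrow> blk w < m"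
  shows "(\<Sum>v\<in>block n blk i. \<Sum>w\<in>{0..<n} - {v}. Kv n blk k v w * \<bar>\<sigma> w - \<sigma>' w\<bar>)
    = 2 * (card (block n blk i) * (\<Sum>j<m. k i j / n * block_dist n blk j \<sigma> \<sigma>')
      - k i i / n * block_dist n blk i \<sigma> \<sigma>')"
proof -
  have "(\<Sum>v\<in>block n blk i. \<Sum>w\<in>{0..<n} - {v}. Kv n blk k v w * \<bar>\<sigma> w - \<sigma>' w\<bar>)
      = (\<Sum>v\<in>block n blk i. 2 * (\<Sum>j<m. k i j / n * block_dist n blk j \<sigma> \<sigma>')
          - k i i / n * \<bar>\<sigma> v - \<sigma>' v\<bar>)"
    by (intro sum.cong refl, subst sum_Kv_abs_diff[OF assms]) auto
  also have "\<dots> = 2 * (card (block n blk i) * (\<Sum>j<m. k i j / n * block_dist n blk j \<sigma> \<sigma>')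
      - k i i / n * block_dist n blk i \<sigma> \<sigma>')"
    by (simp add: sum_subtractf block_dist_def algebra_simps flip: sum_distrib_left sum_divide_distrib)
  finally show ?thesis .
qed

lemma sum_Amat_mult:
  assumes "i < m"
  shows "(\<Sum>j<m. Amat n p k \<beta> i j * x j)
    = (1 - 1 / n) * x i + \<beta> * (p i * (\<Sum>j<m. k i j / n * x j) - k i i / n * x i / n)"
proof -
  let ?c = "(1 - 1 / n - \<beta> * (k i i / n) / n) * x i"
  have "(\<Sum>j<m. Amat n p k \<beta> i j * x j)
      = (\<Sum>j<m. \<beta> * p i * (k i j / n * x j) + (if j = i then ?c else 0))"
    unfolding Amat_def by (intro sum.cong) (auto simp: algebra_simps diff_divide_distrib)
  also have "\<dots> = \<beta> * p i * (\<Sum>j<m. k i j / n * x j) + ?c"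
    using assms by (simp add: sum.distrib sum_distrib_left)
  finally show ?thesis by (simp add: algebra_simps)
qed

text \<open>Here \<open>R v\<close> stands for the probability that the two chains disagree at \<open>v\<close> after \<open>v\<close>
  has been resampled.\<close>

lemma average_updated_block_dist_le_Amat:
  assumes n: "n \<ge> 1" and i: "i < m"
    and blk: "\<And>v. v < n \<Longrightarrow> blk v < m"
    and card: "real (card (block n blk i)) = real n * p i"
    and R: "\<And>v. v < n \<Longrightarrow> blk v = i \<Longrightarrow>
      R v \<le> \<beta> / 2 * (\<Sum>w\<in>{0..<n} - {v}. Kv n blk k v w * \<bar>\<sigma> w - \<sigma>' w\<bar>)"
  shows "(\<Sum>v\<in>{0..<n}. block_dist n blk i \<sigma> \<sigma>'
      + (if blk v = i then R v - \<bar>\<sigma> v - \<sigma>' v\<bar> / 2 else 0)) / n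
    \<le> (\<Sum>j<m. Amat n p k \<beta> i j * block_dist n blk j \<sigma> \<sigma>')"
proof -
  let ?d = "\<lambda>j. block_dist n blk j \<sigma> \<sigma>'"
  let ?S = "\<Sum>j<m. k i j / n * ?d j"
  have "(\<Sum>v\<in>{0..<n}. (if blk v = i then R v - \<bar>\<sigma> v - \<sigma>' v\<bar> / 2 else 0))
      = (\<Sum>v\<in>block n blk i. R v - \<bar>\<sigma> v - \<sigma>' v\<bar> / 2)"
    by (rule sum.inter_filter[symmetric]) simp
  also have "\<dots> = (\<Sum>v\<in>block n blk i. R v) - ?d i"
    by (simp add: sum_subtractf block_dist_def sum_divide_distrib)
  finally have lhs: "(\<Sum>v\<in>{0..<n}. ?d i + (if blk v = i then R v - \<bar>\<sigma> v - \<sigma>' v\<bar> / 2 else 0))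
      = n * ?d i + (\<Sum>v\<in>block n blk i. R v) - ?d i"
    by (simp add: sum.distrib)
  have "(\<Sum>v\<in>block n blk i. R v)
      \<le> (\<Sum>v\<in>block n blk i. \<beta> / 2 * (\<Sum>w\<in>{0..<n} - {v}. Kv n blk k v w * \<bar>\<sigma> w - \<sigma>' w\<bar>))"
    using R by (intro sum_mono) auto
  also have "\<dots> = \<beta> / 2 * (\<Sum>v\<in>block n blk i. \<Sum>w\<in>{0..<n} - {v}. Kv n blk k v w * \<bar>\<sigma> w - \<sigma>' w\<bar>)"
    by (rule sum_distrib_left[symmetric])
  also have "\<dots> = \<beta> * (n * p i * ?S - k i i / n * ?d i)"
    by (simp only: sum_block_Kv_abs_diff[OF blk] card)
  finally have "(\<Sum>v\<in>block n blk i. R v) \<le> \<beta> * (n * p i * ?S - k i i / n * ?d i)" .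
  then have "(\<Sum>v\<in>{0..<n}. ?d i + (if blk v = i then R v - \<bar>\<sigma> v - \<sigma>' v\<bar> / 2 else 0)) / n
      \<le> (n * ?d i + \<beta> * (n * p i * ?S - k i i / n * ?d i) - ?d i) / n"
    unfolding lhs by (intro divide_right_mono) auto
  also have "\<dots> = (\<Sum>j<m. Amat n p k \<beta> i j * ?d j)"
    unfolding sum_Amat_mult[OF i] using n by (simp add: field_simps)
  finally show ?thesis .
qed

lemma Amat_nonneg:
  assumes n: "n \<ge> 1" and i: "i < m" and j: "j < m"
    and p: "p i > 0" and card: "real (card (block n blk i)) = real n * p i"
    and k: "\<And>i j. i < m \<Longrightarrow> j < m \<Longrightarrow> k i j \<ge> 0" and \<beta>: "\<beta> \<ge> 0"
  shows "Amat n p k \<beta> i j \<ge> 0"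
proof (cases "i = j")
  case True
  have "real (card (block n blk i)) > 0"
    using card n p by simp
  then have "real n * p i \<ge> 1"
    unfolding card[symmetric] by simp
  then have "p i - 1 / n \<ge> 0" and "1 - 1 / n \<ge> 0"
    using n by (simp_all add: field_simps)
  with True show ?thesis
    unfolding Amat_def using k[OF i i] \<beta> by simp
next
  case False
  then show ?thesis
    unfolding Amat_def using k[OF i j] \<beta> p by simp
qed

definition coupled_update ::
  "nat \<Rightarrow> (nat \<Rightarrow> nat) \<Rightarrow> (nat \<Rightarrow> nat \<Rightarrow> real) \<Rightarrow> real \<Rightarrow> config \<times> config \<Rightarrow> nat \<times> real
    \<Rightarrow> config \<times> config" where
  "coupled_update n blk k \<beta> x = (\<lambda>(I, U).
     (glauber_update n blk k \<beta> (fst x) I U, glauber_update n blk k \<beta> (snd x) I U))"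

lemma coupling_step_eq_distr:
  "coupling_step n blk k \<beta> x = distr (noise n) (count_space UNIV) (coupled_update n blk k \<beta> x)"
  unfolding coupling_step_def coupled_update_def ..

lemma sets_noise: "sets (noise n) = sets (count_space {0..<n} \<Otimes>\<^sub>M lborel)"
  unfolding noise_def by (intro sets_pair_measure_cong) (auto simp: sets_uniform_count_measure)

lemma measurable_coupled_update:
  "coupled_update n blk k \<beta> (\<sigma>, \<sigma>') \<in> measurable (noise n) (count_space UNIV)"
proof -
  have "coupled_update n blk k \<beta> (\<sigma>, \<sigma>')
      \<in> measurable (count_space {0..<n} \<Otimes>\<^sub>M lborel) (count_space UNIV)"
  proof (rule measurable_pair_measure_countable1)
    fix I :: nat
    define a where "a = r_plus \<beta> (Sfield n blk k I \<sigma>)"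
    define b where "b = r_plus \<beta> (Sfield n blk k I \<sigma>')"
    have "(\<lambda>U. coupled_update n blk k \<beta> (\<sigma>, \<sigma>') (I, U))
      = (\<lambda>U. (\<sigma>(I := if U \<le> a then 1 else -1), \<sigma>'(I := if U \<le> b then 1 else -1)))"
      unfolding coupled_update_def glauber_update_def a_def b_def by simp
    also have "\<dots> = (\<lambda>U. if U \<le> a
        then (if U \<le> b then (\<sigma>(I := 1), \<sigma>'(I := 1)) else (\<sigma>(I := 1), \<sigma>'(I := -1)))
        else (if U \<le> b then (\<sigma>(I := -1), \<sigma>'(I := 1)) else (\<sigma>(I := -1), \<sigma>'(I := -1))))"
      by auto
    finally show "(\<lambda>U. coupled_update n blk k \<beta> (\<sigma>, \<sigma>') (I, U))
        \<in> measurable lborel (count_space UNIV)"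
      by simp
  qed auto
  then show ?thesis by (subst measurable_cong_sets[OF sets_noise refl])
qed

lemma prob_space_noise: "n \<ge> 1 \<Longrightarrow> prob_space (noise n)"
  unfolding noise_def
  by (intro prob_space_pair prob_space_uniform_count_measure prob_space_uniform_measure) auto

lemma coupling_step_in_subprob_algebra:
  assumes "n \<ge> 1"
  shows "coupling_step n blk k \<beta> x \<in> space (subprob_algebra (count_space UNIV))"
proof -
  interpret noise: prob_space "noise n" by (rule prob_space_noise[OF assms])
  obtain \<sigma> \<sigma>' where x: "x = (\<sigma>, \<sigma>')" by (cases x)
  have "prob_space (coupling_step n blk k \<beta> x)"
    unfolding coupling_step_eq_distr x by (rule noise.prob_space_distr[OF measurable_coupled_update])
  then show ?thesis
    by (auto simp: space_subprob_algebra coupling_step_def intro: prob_space_imp_subprob_space)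
qed

lemma nn_integral_coupling_step:
  "(\<integral>\<^sup>+y. f y \<partial>coupling_step n blk k \<beta> (\<sigma>, \<sigma>'))
    = (\<Sum>I\<in>{0..<n}. ennreal (1 / n)
        * (\<integral>\<^sup>+U. f (coupled_update n blk k \<beta> (\<sigma>, \<sigma>') (I, U)) \<partial>uniform_measure lborel {0..1}))"
proof -
  let ?U = "uniform_measure lborel {0..1::real}"
  interpret U: prob_space ?U by (rule prob_space_uniform_measure) auto
  note g = measurable_coupled_update[of n blk k \<beta> \<sigma> \<sigma>']
  have "(\<integral>\<^sup>+y. f y \<partial>coupling_step n blk k \<beta> (\<sigma>, \<sigma>'))
      = (\<integral>\<^sup>+z. f (coupled_update n blk k \<beta> (\<sigma>, \<sigma>') z) \<partial>noise n)"
    unfolding coupling_step_eq_distr by (subst nn_integral_distr[OF g]) auto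
  also have "\<dots> = (\<integral>\<^sup>+I. \<integral>\<^sup>+U. f (coupled_update n blk k \<beta> (\<sigma>, \<sigma>') (I, U)) \<partial>?U
      \<partial>uniform_count_measure {0..<n})"
    unfolding noise_def
    by (rule U.nn_integral_fst[symmetric]) (rule measurable_compose[OF g[unfolded noise_def]]; simp)
  also have "\<dots> = (\<Sum>I\<in>{0..<n}. ennreal (1 / n)
      * (\<integral>\<^sup>+U. f (coupled_update n blk k \<beta> (\<sigma>, \<sigma>') (I, U)) \<partial>?U))"
    unfolding uniform_count_measure_def by (subst nn_integral_point_measure_finite) auto
  finally show ?thesis .
qed

lemma block_dist_coupled_update:
  assumes "I < n"
  shows "block_dist n blk i (fst (coupled_update n blk k \<beta> (\<sigma>, \<sigma>') (I, U)))
      (snd (coupled_update n blk k \<beta> (\<sigma>, \<sigma>') (I, U)))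
    = block_dist n blk i \<sigma> \<sigma>' + (if blk I = i
        then indicator {min (r_plus \<beta> (Sfield n blk k I \<sigma>)) (r_plus \<beta> (Sfield n blk k I \<sigma>'))
          <..max (r_plus \<beta> (Sfield n blk k I \<sigma>)) (r_plus \<beta> (Sfield n blk k I \<sigma>'))} U
          - \<bar>\<sigma> I - \<sigma>' I\<bar> / 2
        else 0)"
  unfolding coupled_update_def glauber_update_def
  by (simp add: block_dist_fun_upd[OF assms] split: split_indicator) (auto simp: max_def min_def)

lemma nn_integral_uniform_indicator_between_le:
  fixes a b c e :: real
  assumes "c \<ge> 0" "e \<ge> 0"
  shows "(\<integral>\<^sup>+U. ennreal (c + e * indicator {min a b<..max a b} U) \<partial>uniform_measure lborel {0..1})
     \<le> ennreal (c + e * \<bar>a - b\<bar>)"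
proof -
  let ?M = "uniform_measure lborel {0..1::real}"
  let ?S = "{min a b<..max a b}"
  interpret M: prob_space ?M by (rule prob_space_uniform_measure) auto
  have "emeasure ?M ?S = emeasure lborel ({0..1} \<inter> ?S)"
    by (simp add: divide_ennreal_def)
  also have "\<dots> \<le> emeasure lborel ?S"
    by (intro emeasure_mono) auto
  also have "\<dots> = ennreal \<bar>a - b\<bar>"
    by (simp add: max_def min_def)
  finally have S: "emeasure ?M ?S \<le> ennreal \<bar>a - b\<bar>" .
  have "(\<integral>\<^sup>+U. ennreal (c + e * indicator ?S U) \<partial>?M)
      = (\<integral>\<^sup>+U. ennreal c + ennreal e * indicator ?S U \<partial>?M)"
    using assms by (intro nn_integral_cong) (auto split: split_indicator)
  also have "\<dots> = ennreal c + ennreal e * emeasure ?M ?S"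
    by (simp add: nn_integral_add nn_integral_cmult_indicator M.emeasure_space_1)
  also have "\<dots> \<le> ennreal c + ennreal e * ennreal \<bar>a - b\<bar>"
    using S by (intro add_left_mono mult_left_mono) auto
  also have "\<dots> = ennreal (c + e * \<bar>a - b\<bar>)"
    using assms by (simp add: ennreal_mult)
  finally show ?thesis .
qed

lemma nn_integral_block_dist_coupled_update_le:
  assumes "I < n"
  shows "(\<integral>\<^sup>+U. ennreal (block_dist n blk i (fst (coupled_update n blk k \<beta> (\<sigma>, \<sigma>') (I, U)))
        (snd (coupled_update n blk k \<beta> (\<sigma>, \<sigma>') (I, U)))) \<partial>uniform_measure lborel {0..1})
    \<le> ennreal (block_dist n blk i \<sigma> \<sigma>' + (if blk I = i
        then \<bar>r_plus \<beta> (Sfield n blk k I \<sigma>) - r_plus \<beta> (Sfield n blk k I \<sigma>')\<bar> - \<bar>\<sigma> I - \<sigma>' I\<bar> / 2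
        else 0))"
proof -
  define a where "a = r_plus \<beta> (Sfield n blk k I \<sigma>)"
  define b where "b = r_plus \<beta> (Sfield n blk k I \<sigma>')"
  define c where "c = block_dist n blk i \<sigma> \<sigma>' - (if blk I = i then \<bar>\<sigma> I - \<sigma>' I\<bar> / 2 else 0)"
  define e :: real where "e = (if blk I = i then 1 else 0)"
  have "c \<ge> 0"
    using abs_diff_le_block_dist[OF assms, of \<sigma> \<sigma>' blk] block_dist_nonneg[of n blk i \<sigma> \<sigma>']
    unfolding c_def by auto
  have "(\<integral>\<^sup>+U. ennreal (block_dist n blk i (fst (coupled_update n blk k \<beta> (\<sigma>, \<sigma>') (I, U)))
        (snd (coupled_update n blk k \<beta> (\<sigma>, \<sigma>') (I, U)))) \<partial>uniform_measure lborel {0..1})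
      = (\<integral>\<^sup>+U. ennreal (c + e * indicator {min a b<..max a b} U) \<partial>uniform_measure lborel {0..1})"
    by (intro nn_integral_cong)
      (auto simp: block_dist_coupled_update[OF assms] a_def b_def c_def e_def algebra_simps)
  also have "\<dots> \<le> ennreal (c + e * \<bar>a - b\<bar>)"
    using \<open>c \<ge> 0\<close> by (intro nn_integral_uniform_indicator_between_le) (auto simp: e_def)
  finally show ?thesis
    unfolding a_def b_def c_def e_def by (cases "blk I = i") (simp_all add: algebra_simps)
qed

lemma nn_integral_coupling_step_block_dist_le:
  assumes n: "n \<ge> 1" and i: "i < m"
    and blk: "\<And>v. v < n \<Longrightarrow> blk v < m"
    and k: "\<And>i j. i < m \<Longrightarrow> j < m \<Longrightarrow> k i j \<ge> 0" and \<beta>: "\<beta> \<ge> 0"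
    and card: "real (card (block n blk i)) = real n * p i"
  shows "(\<integral>\<^sup>+y. ennreal (block_dist n blk i (fst y) (snd y)) \<partial>coupling_step n blk k \<beta> (\<sigma>, \<sigma>'))
    \<le> ennreal (\<Sum>j<m. Amat n p k \<beta> i j * block_dist n blk j \<sigma> \<sigma>')"
proof -
  define R where "R I = \<bar>r_plus \<beta> (Sfield n blk k I \<sigma>) - r_plus \<beta> (Sfield n blk k I \<sigma>')\<bar>" for I
  define x where "x I = block_dist n blk i \<sigma> \<sigma>'
    + (if blk I = i then R I - \<bar>\<sigma> I - \<sigma>' I\<bar> / 2 else 0)" for I
  have x_nonneg: "x I \<ge> 0" if "I < n" for I
    using abs_diff_le_block_dist[OF that, of \<sigma> \<sigma>' blk] block_dist_nonneg[of n blk i \<sigma> \<sigma>']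
      abs_ge_zero[of "r_plus \<beta> (Sfield n blk k I \<sigma>) - r_plus \<beta> (Sfield n blk k I \<sigma>')"]
    unfolding x_def R_def by (auto; arith)
  have "(\<integral>\<^sup>+y. ennreal (block_dist n blk i (fst y) (snd y)) \<partial>coupling_step n blk k \<beta> (\<sigma>, \<sigma>'))
      \<le> (\<Sum>I\<in>{0..<n}. ennreal (1 / n) * ennreal (x I))"
    unfolding nn_integral_coupling_step x_def R_def
    by (intro sum_mono mult_left_mono nn_integral_block_dist_coupled_update_le) auto
  also have "\<dots> = ennreal ((\<Sum>I\<in>{0..<n}. x I) / n)"
    using x_nonneg by (simp add: sum_divide_distrib ennreal_mult[symmetric]) (intro sum_ennreal; simp)
  also have "\<dots> \<le> ennreal (\<Sum>j<m. Amat n p k \<beta> i j * block_dist n blk j \<sigma> \<sigma>')"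
  proof (rule ennreal_leI)
    have "R I \<le> \<beta> / 2 * (\<Sum>w\<in>{0..<n} - {I}. Kv n blk k I w * \<bar>\<sigma> w - \<sigma>' w\<bar>)" if "I < n" for I
      unfolding R_def using that blk k \<beta> by (intro abs_r_plus_Sfield_diff_le) (auto simp: Kv_def)
    then show "(\<Sum>I\<in>{0..<n}. x I) / n \<le> (\<Sum>j<m. Amat n p k \<beta> i j * block_dist n blk j \<sigma> \<sigma>')"
      unfolding x_def using n i blk card by (intro average_updated_block_dist_le_Amat) auto
  qed
  finally show ?thesis .
qed

lemma mat_pow_nonneg:
  assumes "\<And>i j. i < m \<Longrightarrow> j < m \<Longrightarrow> A i j \<ge> 0" and "i < m" and "j < m"
  shows "mat_pow m A t i j \<ge> 0"
  using assms(2,3) by (induction t arbitrary: i j) (auto intro!: sum_nonneg mult_nonneg_nonneg assms(1))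

context
  fixes L :: "nat \<Rightarrow> 'a measure" and N :: "'a \<Rightarrow> 'a measure" and x0 :: 'a
  assumes L_0: "L 0 = return (count_space UNIV) x0"
    and L_Suc: "\<And>t. L (Suc t) = L t \<bind> N"
    and N: "\<And>x. N x \<in> space (subprob_algebra (count_space UNIV))"
begin

lemma sets_iterated_bind: "sets (L t) = sets (count_space UNIV)"
proof (induction t)
  case 0
  then show ?case by (simp add: L_0)
next
  case (Suc t)
  have "space (L t) = UNIV"
    using sets_eq_imp_space_eq[OF Suc.IH] by simp
  then show ?case
    unfolding L_Suc using N by (intro sets_bind) (auto simp: space_subprob_algebra)
qed

lemma nn_integral_iterated_bind_le_mat_pow:
  fixes f :: "nat \<Rightarrow> 'a \<Rightarrow> real" and A :: "nat \<Rightarrow> nat \<Rightarrow> real"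
  assumes A: "\<And>i j. i < m \<Longrightarrow> j < m \<Longrightarrow> A i j \<ge> 0"
    and f: "\<And>i x. i < m \<Longrightarrow> f i x \<ge> 0"
    and drift: "\<And>i x. i < m \<Longrightarrow> (\<integral>\<^sup>+y. f i y \<partial>N x) \<le> ennreal (\<Sum>j<m. A i j * f j x)"
    and i: "i < m"
  shows "(\<integral>\<^sup>+x. f i x \<partial>L t) \<le> ennreal (\<Sum>j<m. mat_pow m A t i j * f j x0)"
  using i
proof (induction t arbitrary: i)
  case 0
  then show ?case
    by (simp add: L_0 nn_integral_return if_distrib[of "\<lambda>a. a * _"] cong: if_cong)
next
  case (Suc t)
  let ?P = "\<lambda>j. \<Sum>l<m. mat_pow m A t j l * f l x0"
  have P_nonneg: "?P j \<ge> 0" if "j < m" for j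
    using that A f by (intro sum_nonneg mult_nonneg_nonneg mat_pow_nonneg) auto
  have N_meas: "N \<in> measurable (L t) (subprob_algebra (count_space UNIV))"
    using N by (subst measurable_cong_sets[OF sets_iterated_bind refl]) simp
  have f_meas: "(\<lambda>x. ennreal (f j x)) \<in> borel_measurable (L t)" for j
    by (subst measurable_cong_sets[OF sets_iterated_bind refl]) simp
  have "(\<integral>\<^sup>+x. f i x \<partial>L (Suc t)) = (\<integral>\<^sup>+x. \<integral>\<^sup>+y. f i y \<partial>N x \<partial>L t)"
    unfolding L_Suc by (rule nn_integral_bind[OF _ N_meas]) simp
  also have "\<dots> \<le> (\<integral>\<^sup>+x. ennreal (\<Sum>j<m. A i j * f j x) \<partial>L t)"
    using Suc.prems by (intro nn_integral_mono drift)
  also have "\<dots> = (\<integral>\<^sup>+x. (\<Sum>j<m. ennreal (A i j) * ennreal (f j x)) \<partial>L t)"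
    using A Suc.prems f
    by (intro nn_integral_cong, subst sum_ennreal[symmetric]) (auto simp: ennreal_mult')
  also have "\<dots> = (\<Sum>j<m. ennreal (A i j) * (\<integral>\<^sup>+x. f j x \<partial>L t))"
    using f_meas by (simp add: nn_integral_sum nn_integral_cmult)
  also have "\<dots> \<le> (\<Sum>j<m. ennreal (A i j) * ennreal (?P j))"
    using Suc.IH by (intro sum_mono mult_left_mono) auto
  also have "\<dots> = ennreal (\<Sum>j<m. A i j * ?P j)"
    using A Suc.prems P_nonneg
    by (subst sum_ennreal[symmetric]) (auto simp: ennreal_mult' intro!: mult_nonneg_nonneg)
  also have "(\<Sum>j<m. A i j * ?P j) = (\<Sum>l<m. mat_pow m A (Suc t) i l * f l x0)"
    by (simp add: sum_distrib_left sum_distrib_right mult.assoc) (rule sum.swap)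
  finally show ?case .
qed

lemma integral_iterated_bind_le_mat_pow:
  fixes f :: "nat \<Rightarrow> 'a \<Rightarrow> real" and A :: "nat \<Rightarrow> nat \<Rightarrow> real"
  assumes A: "\<And>i j. i < m \<Longrightarrow> j < m \<Longrightarrow> A i j \<ge> 0"
    and f: "\<And>i x. i < m \<Longrightarrow> f i x \<ge> 0"
    and drift: "\<And>i x. i < m \<Longrightarrow> (\<integral>\<^sup>+y. f i y \<partial>N x) \<le> ennreal (\<Sum>j<m. A i j * f j x)"
    and i: "i < m"
  shows "(\<integral>x. f i x \<partial>L t) \<le> (\<Sum>j<m. mat_pow m A t i j * f j x0)"
proof -
  have "(\<integral>x. f i x \<partial>L t) = enn2real (\<integral>\<^sup>+x. f i x \<partial>L t)"
    using f[OF i]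
    by (intro integral_eq_nn_integral) (simp_all add: measurable_cong_sets[OF sets_iterated_bind refl])
  also have "\<dots> \<le> (\<Sum>j<m. mat_pow m A t i j * f j x0)"
    using nn_integral_iterated_bind_le_mat_pow[OF A f drift i] A f i
    by (intro enn2real_leI sum_nonneg mult_nonneg_nonneg mat_pow_nonneg) auto
  finally show ?thesis .
qed

end

theorem lemma4p2:
  fixes m n :: nat and p :: "nat \<Rightarrow> real" and k :: "nat \<Rightarrow> nat \<Rightarrow> real"
    and \<beta> :: real and blk :: "nat \<Rightarrow> nat" and \<sigma>0 \<sigma>0' :: config and t :: nat
  assumes "m \<ge> 1" and "n \<ge> 1"
    and "\<And>i. i < m \<Longrightarrow> p i > 0" and "(\<Sum>i<m. p i) = 1"
    and "\<And>i j. i < m \<Longrightarrow> j < m \<Longrightarrow> k i j = k j i"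
    and "\<And>i j. i < m \<Longrightarrow> j < m \<Longrightarrow> k i j > 0"
    and "\<beta> \<ge> 0"
    and "\<And>v. v < n \<Longrightarrow> blk v < m"
    and "\<And>i. i < m \<Longrightarrow> real (card {v\<in>{0..<n}. blk v = i}) = real n * p i"
    and "\<sigma>0 \<in> Omega n" and "\<sigma>0' \<in> Omega n"
  shows "\<forall>i<m.
    (\<integral>x. block_dist n blk i (fst x) (snd x) \<partial>coupling_law n blk k \<beta> (\<sigma>0, \<sigma>0') t)
      \<le> (\<Sum>j<m. mat_pow m (Amat n p k \<beta>) t i j * block_dist n blk j \<sigma>0 \<sigma>0')"
proof (intro allI impI)
  \<comment> \<open>The bound holds for arbitrary real starting configurations.\<close>
  note n = assms(2) and p = assms(3) and \<beta> = assms(7) and blk = assms(8) and card = assms(9)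
  have k: "k i j \<ge> 0" if "i < m" "j < m" for i j
    using assms(6)[OF that] by simp
  let ?d = "\<lambda>j x. block_dist n blk j (fst x) (snd x)"
  fix i assume i: "i < m"
  have "(\<integral>x. ?d i x \<partial>coupling_law n blk k \<beta> (\<sigma>0, \<sigma>0') t)
      \<le> (\<Sum>j<m. mat_pow m (Amat n p k \<beta>) t i j * ?d j (\<sigma>0, \<sigma>0'))"
  proof (rule integral_iterated_bind_le_mat_pow[where N = "coupling_step n blk k \<beta>"])
    show "coupling_step n blk k \<beta> x \<in> space (subprob_algebra (count_space UNIV))" for x
      by (rule coupling_step_in_subprob_algebra[OF n])
    show "Amat n p k \<beta> i j \<ge> 0" if "i < m" "j < m" for i j
      using that n p card k \<beta> by (intro Amat_nonneg) auto
    show "(\<integral>\<^sup>+y. ?d i y \<partial>coupling_step n blk k \<beta> x) \<le> ennreal (\<Sum>j<m. Amat n p k \<beta> i j * ?d j x)"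
      if "i < m" for i x
      using that n blk k \<beta> card nn_integral_coupling_step_block_dist_le[of n i m blk k \<beta> p "fst x" "snd x"]
      by simp
  qed (simp_all add: i block_dist_nonneg)
  then show "(\<integral>x. ?d i x \<partial>coupling_law n blk k \<beta> (\<sigma>0, \<sigma>0') t)
      \<le> (\<Sum>j<m. mat_pow m (Amat n p k \<beta>) t i j * block_dist n blk j \<sigma>0 \<sigma>0')"
    by simp
qed

end
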